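(* Let $\mathcal{H}$ be a finite-dimensional complex Hilbert space and let $U,V$ be unitary operators on $\mathcal{H}$ satisfying $V^{-1}U^2V=U^3$. Then $UV^{-1}UV=V^{-1}UVU$. *)

theory Defs
  imports "HOL-Analysis.Analysis"
begin

text \<open>A finite-dimensional complex Hilbert space is modelled as C^n (index type 'n, standard
inner product); operators are n x n complex matrices.\<close>

definition cmat_adjoint :: "complex^'n^'m \<Rightarrow> complex^'m^'n" where
  "cmat_adjoint A = (\<chi> i j. cnj (A $ j $ i))"

definition unitary_mat :: "complex^'n^'n \<Rightarrow> bool" where
  "unitary_mat U \<longleftrightarrow> cmat_adjoint U ** U = mat 1 \<and> U ** cmat_adjoint U = mat 1"

end

theory Submission
  imports Defs "HOL-Computational_Algebra.Fundamental_Theorem_Algebra" "HOL-Computational_Algebra.Primes"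
begin

(* Put W = V^-1 U V.  The hypothesis says W^2 = U^3, and the conclusion says that
   U and W commute.  Since W commutes with W^2 = U^3, it suffices to show that U is a power
   of U^3, and this holds as soon as U^M = 1 for some M not divisible by 3.

   Let S be the (finite) set of eigenvalues of U.  W is similar to U, so r in S gives the
   eigenvalue r^2 of W^2 = U^3, and hence an eigenvalue m in S with m^3 = r^2.  Iterating
   this map inside the finite set S shows, by a purely arithmetic argument, that every r in S
   is a root of unity of order prime to 3.  Finally, a unitary matrix whose eigenvalues all
   satisfy r^M = 1 satisfies U^M = 1, since the orthogonal complement of the fixed space of
   U^M is U-invariant and would otherwise contain an eigenvector of U. *)

fun mpow :: "'a::comm_ring_1^'n^'n \<Rightarrow> nat \<Rightarrow> 'a^'n^'n" where
  "mpow A 0 = mat 1"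
| "mpow A (Suc k) = A ** mpow A k"

lemma mpow_add: "mpow A (a + b) = mpow A a ** mpow A b"
  by (induction a) (auto simp: matrix_mul_assoc)

lemma mpow_mult: "mpow A (a * b) = mpow (mpow A a) b"
  by (induction b) (simp_all add: mpow_add)

lemma mpow_three: "mpow A 3 = A ** A ** A"
  by (simp add: numeral_3_eq_3 matrix_mul_assoc)

lemma mpow_comm:
  assumes "A ** B = B ** A"
  shows "mpow A k ** B = B ** mpow A k"
proof (induction k)
  case 0 then show ?case by simp
next
  case (Suc k)
  have "mpow A (Suc k) ** B = A ** (mpow A k ** B)" by (simp add: matrix_mul_assoc)
  also have "\<dots> = (A ** B) ** mpow A k" using Suc by (simp add: matrix_mul_assoc)
  also have "\<dots> = B ** mpow A (Suc k)" using assms by (simp add: matrix_mul_assoc)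
  finally show ?case .
qed

section \<open>Polynomials acting on vectors\<close>

definition papp :: "complex^'n^'n \<Rightarrow> complex poly \<Rightarrow> complex^'n \<Rightarrow> complex^'n" where
  "papp A p x = (\<Sum>k<Suc (degree p). coeff p k *s (mpow A k *v x))"

lemma matrix_vector_sum_right: "(A::complex^'n^'m) *v sum f S = (\<Sum>i\<in>S. A *v f i)"
  by (induction S rule: infinite_finite_induct) (auto simp: matrix_vector_right_distrib)

lemma matrix_vector_sum_left: "sum f S *v (x::complex^'n) = (\<Sum>i\<in>S. f i *v x)"
  by (induction S rule: infinite_finite_induct) (auto simp: matrix_vector_mult_add_rdistrib)

lemma sum_vector_smult_left: "(\<Sum>i\<in>S. c *s f i) = (c::complex) *s sum f S"
  by (simp add: vec_eq_iff sum_distrib_left)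

lemma sum_vector_smult_right: "sum f S *s (z::complex^'n) = (\<Sum>i\<in>S. f i *s z)"
  by (simp add: vec_eq_iff sum_distrib_right)

lemma papp_bound:
  assumes "degree p < N"
  shows "papp A p x = (\<Sum>k<N. coeff p k *s (mpow A k *v x))"
  unfolding papp_def
proof (rule sum.mono_neutral_left)
  show "\<forall>i\<in>{..<N} - {..<Suc (degree p)}. coeff p i *s (mpow A i *v x) = 0"
    by (auto simp: coeff_eq_0)
qed (use assms in auto)

lemma papp_add: "papp A (p + q) x = papp A p x + papp A q x"
proof -
  define N where "N = Suc (max (degree p) (degree q))"
  have "degree (p + q) < N" "degree p < N" "degree q < N"
    using degree_add_le_max[of p q] by (auto simp: N_def)
  then show ?thesis
    by (simp add: papp_bound[of _ N] vector_sadd_rdistrib sum.distrib)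
qed

lemma papp_diff: "papp A (p - q) x = papp A p x - papp A q x"
  using papp_add[of A "p - q" q x] by (simp add: algebra_simps)

lemma papp_smult: "papp A (smult c p) x = c *s papp A p x"
proof -
  have "degree (smult c p) < Suc (degree p)" by simp
  then show ?thesis
    by (simp add: papp_bound[of _ "Suc (degree p)"] papp_def vector_smult_assoc
        flip: sum_vector_smult_left)
qed

lemma papp_zero [simp]: "papp A 0 x = 0"
  by (simp add: papp_def)

lemma papp_sum: "papp A (sum f S) x = (\<Sum>i\<in>S. papp A (f i) x)"
  by (induction S rule: infinite_finite_induct) (auto simp: papp_add)

lemma papp_pCons: "papp A (pCons a p) x = a *s x + A *v papp A p x"
proof -
  define N where "N = Suc (degree p)"
  have d: "degree (pCons a p) < Suc N" "degree p < N"
    by (auto simp: N_def degree_pCons_le le_less_trans)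
  have "papp A (pCons a p) x = (\<Sum>k<Suc N. coeff (pCons a p) k *s (mpow A k *v x))"
    by (rule papp_bound[OF d(1)])
  also have "\<dots> = a *s x + (\<Sum>k<N. coeff p k *s (mpow A (Suc k) *v x))"
    by (simp only: sum.lessThan_Suc_shift) simp
  also have "(\<Sum>k<N. coeff p k *s (mpow A (Suc k) *v x)) = A *v papp A p x"
    by (simp add: papp_bound[OF d(2)] matrix_vector_sum_right vector_scalar_commute
        matrix_vector_mul_assoc)
  finally show ?thesis .
qed

lemma papp_one [simp]: "papp A 1 x = x"
  by (simp add: one_pCons papp_pCons papp_def)

lemma papp_linear_factor: "papp A ([:-r, 1:] * q) x = A *v papp A q x - r *s papp A q x"
proof -
  have "[:-r, 1:] * q = pCons 0 q - smult r q" by simp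
  then show ?thesis
    by (simp add: papp_diff papp_smult papp_pCons)
qed

lemma papp_monom: "papp A (monom c k) x = c *s (mpow A k *v x)"
proof (induction k)
  case 0 then show ?case by (simp add: monom_0 papp_def)
next
  case (Suc k) then show ?case
    by (simp add: monom_Suc papp_pCons vector_scalar_commute matrix_vector_mul_assoc)
qed

lemma eigenvector_mpow:
  fixes A :: "complex^'n^'n"
  shows "A *v z = r *s z \<Longrightarrow> mpow A k *v z = r ^ k *s z"
  by (induction k)
    (auto simp: matrix_vector_mul_assoc[symmetric] vector_scalar_commute vector_smult_assoc)

lemma eigenvector_papp:
  assumes "A *v z = r *s z"
  shows "papp A p z = poly p r *s z"
  by (simp add: papp_def eigenvector_mpow[OF assms] vector_smult_assoc poly_altdef
      lessThan_Suc_atMost sum_vector_smult_right)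

text \<open>Every square matrix has a nonzero annihilating polynomial: the powers
  \<open>A^0, \<dots>, A^D\<close> with \<open>D\<close> the dimension of the matrix space are either not distinct
  or linearly dependent.\<close>

lemma matrix_vector_scaleR: "(A::complex^'n^'m) *v ((c::real) *\<^sub>R x) = c *\<^sub>R (A *v x)"
  by (simp add: vec_eq_iff matrix_vector_mult_def scaleR_sum_right)

lemma matrix_scaleR_vector: "((c::real) *\<^sub>R (M::complex^'n^'m)) *v x = of_real c *s (M *v x)"
  by (simp add: vec_eq_iff matrix_vector_mult_def sum_distrib_left)
    (simp add: scaleR_conv_of_real mult.assoc)

lemma annihilating_poly:
  fixes A :: "complex^'n^'n"
  shows "\<exists>p::complex poly. p \<noteq> 0 \<and> (\<forall>x. papp A p x = 0)"
proof -
  define D where "D = DIM(complex^'n^'n)"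
  show ?thesis
  proof (cases "inj_on (mpow A) {..D}")
    case False
    then obtain i j where ij: "i \<noteq> j" "mpow A i = mpow A j" unfolding inj_on_def by auto
    define p where "p = monom 1 i - monom (1::complex) j"
    have "coeff p i = 1" using ij by (simp add: p_def coeff_monom)
    then have "p \<noteq> 0" by auto
    moreover have "papp A p x = 0" for x by (simp add: p_def papp_diff papp_monom ij(2))
    ultimately show ?thesis by blast
  next
    case True
    let ?P = "mpow A ` {..D}"
    have "card ?P = Suc D" using True by (simp add: card_image)
    then have "dependent ?P" by (intro dependent_biggerset) (auto simp: D_def)
    then obtain c where c: "(\<Sum>v\<in>?P. c v *\<^sub>R v) = 0" and cv: "\<exists>v\<in>?P. c v \<noteq> 0"
      using independent_explicit[of ?P] by auto
    define p where "p = (\<Sum>k\<le>D. monom (complex_of_real (c (mpow A k))) k)"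
    have cp: "coeff p k = (if k \<le> D then of_real (c (mpow A k)) else 0)" for k
      by (simp add: p_def coeff_sum coeff_monom)
    from cv obtain k where "k \<le> D" "c (mpow A k) \<noteq> 0" by auto
    then have "coeff p k \<noteq> 0" by (simp add: cp)
    then have "p \<noteq> 0" by auto
    moreover have "papp A p x = 0" for x
    proof -
      have "papp A p x = (\<Sum>k\<le>D. of_real (c (mpow A k)) *s (mpow A k *v x))"
        by (simp add: p_def papp_sum papp_monom)
      also have "\<dots> = (\<Sum>k\<le>D. c (mpow A k) *\<^sub>R mpow A k) *v x"
        by (simp add: matrix_vector_sum_left matrix_scaleR_vector)
      also have "(\<Sum>k\<le>D. c (mpow A k) *\<^sub>R mpow A k) = (\<Sum>v\<in>?P. c v *\<^sub>R v)"
        by (simp add: sum.reindex[OF True])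
      finally show ?thesis using c by simp
    qed
    ultimately show ?thesis by blast
  qed
qed

section \<open>Eigenvalues and invariant subspaces\<close>

definition mat_eigenvalue :: "complex^'n^'n \<Rightarrow> complex \<Rightarrow> bool" where
  "mat_eigenvalue A r \<longleftrightarrow> (\<exists>z. z \<noteq> 0 \<and> A *v z = r *s z)"

text \<open>Each eigenvalue is a root of a fixed nonzero annihilating polynomial, so there are
  only finitely many.\<close>

lemma finite_eigenvalues: "finite {r. mat_eigenvalue A r}"
proof -
  obtain p where p: "p \<noteq> 0" "\<And>x. papp A p x = 0" using annihilating_poly by blast
  have "{r. mat_eigenvalue A r} \<subseteq> {r. poly p r = 0}"
  proof
    fix r assume "r \<in> {r. mat_eigenvalue A r}"
    then obtain z where z: "z \<noteq> 0" "A *v z = r *s z" by (auto simp: mat_eigenvalue_def)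
    have "poly p r *s z = 0" using eigenvector_papp[OF z(2), of p] p(2) by simp
    then show "r \<in> {r. poly p r = 0}" using z(1) by simp
  qed
  then show ?thesis using poly_roots_finite[OF p(1)] finite_subset by blast
qed

definition invariant_subspace :: "complex^'n^'n \<Rightarrow> (complex^'n) set \<Rightarrow> bool" where
  "invariant_subspace A F \<longleftrightarrow> 0 \<in> F \<and> (\<forall>x\<in>F. \<forall>y\<in>F. x + y \<in> F) \<and>
     (\<forall>c. \<forall>x\<in>F. c *s x \<in> F) \<and> (\<forall>x\<in>F. A *v x \<in> F)"

lemma invariant_subspace_sum:
  "invariant_subspace A F \<Longrightarrow> (\<And>i. i \<in> S \<Longrightarrow> f i \<in> F) \<Longrightarrow> sum f S \<in> F"
  by (induction S rule: infinite_finite_induct) (auto simp: invariant_subspace_def)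

lemma invariant_subspace_papp:
  assumes F: "invariant_subspace A F" and x: "x \<in> F"
  shows "papp A p x \<in> F"
proof -
  have "mpow A k *v x \<in> F" for k
  proof (induction k)
    case (Suc k)
    then have "A *v (mpow A k *v x) \<in> F" using F by (auto simp: invariant_subspace_def)
    then show ?case by (simp add: matrix_vector_mul_assoc)
  qed (simp add: x)
  then show ?thesis
    using F unfolding papp_def
    by (intro invariant_subspace_sum) (auto simp: invariant_subspace_def)
qed

text \<open>If a product of linear factors kills a nonzero vector of an invariant subspace, one of
  the factors has a nonzero kernel there: peel off factors from the left.\<close>

lemma eigenvector_from_linear_factors:
  assumes F: "invariant_subspace A F" and y: "y \<in> F" "y \<noteq> 0"
    and kill: "papp A (\<Prod>r\<leftarrow>rs. [:-r, 1:]) y = 0"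
  shows "\<exists>r z. z \<in> F \<and> z \<noteq> 0 \<and> A *v z = r *s z"
  using kill
proof (induction rs)
  case Nil
  then show ?case using y(2) by simp
next
  case (Cons r rs)
  define w where "w = papp A (\<Prod>r\<leftarrow>rs. [:-r, 1:]) y"
  have "w \<in> F" unfolding w_def using F y(1) by (rule invariant_subspace_papp)
  have "papp A ([:-r, 1:] * (\<Prod>r\<leftarrow>rs. [:-r, 1:])) y = 0" using Cons.prems by simp
  then have "A *v w = r *s w" unfolding papp_linear_factor w_def by simp
  then show ?case using Cons.IH \<open>w \<in> F\<close> unfolding w_def by (cases "w = 0") auto
qed

text \<open>Every nonzero invariant subspace contains an eigenvector: factor an annihilating
  polynomial into linear factors (fundamental theorem of algebra).\<close>

lemma invariant_subspace_eigenvector: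
  fixes A :: "complex^'n^'n"
  assumes F: "invariant_subspace A F" and y: "y \<in> F" "y \<noteq> 0"
  shows "\<exists>r z. z \<in> F \<and> z \<noteq> 0 \<and> A *v z = r *s z"
proof -
  obtain q where q: "q \<noteq> 0" "\<And>x. papp A q x = 0" using annihilating_poly by blast
  obtain rs where rs: "mset rs = proots q" using ex_mset by blast
  have "(\<Prod>x\<in>#proots q. [:-x, 1:]) = (\<Prod>r\<leftarrow>rs. [:-r, 1:])"
    by (simp flip: rs prod_mset_prod_list)
  then have "q = smult (lead_coeff q) (\<Prod>r\<leftarrow>rs. [:-r, 1:])"
    using complex_poly_decompose_multiset[of q] by simp
  then have "lead_coeff q *s papp A (\<Prod>r\<leftarrow>rs. [:-r, 1:]) y = 0"
    using q(2)[of y] by (metis papp_smult)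
  then have "papp A (\<Prod>r\<leftarrow>rs. [:-r, 1:]) y = 0" using q(1) by simp
  then show ?thesis by (rule eigenvector_from_linear_factors[OF F y])
qed

lemma unitary_matrix_inv:
  assumes "unitary_mat V"
  shows "V ** matrix_inv V = mat 1" "matrix_inv V ** V = mat 1"
proof -
  have "invertible V" using assms unfolding invertible_def unitary_mat_def by blast
  then have "V ** matrix_inv V = mat 1 \<and> matrix_inv V ** V = mat 1"
    unfolding matrix_inv_def invertible_def by (rule someI_ex)
  then show "V ** matrix_inv V = mat 1" "matrix_inv V ** V = mat 1" by auto
qed

lemma unitary_eigenvalue_nonzero:
  assumes "unitary_mat U" "mat_eigenvalue U r"
  shows "r \<noteq> 0"
proof
  assume "r = 0"
  then obtain z where z: "z \<noteq> 0" "U *v z = 0" using assms(2) by (auto simp: mat_eigenvalue_def)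
  have "z = (cmat_adjoint U ** U) *v z" using assms(1) by (simp add: unitary_mat_def)
  also have "\<dots> = 0" by (simp add: matrix_vector_mul_assoc[symmetric] z(2))
  finally show False using z(1) by simp
qed

lemma inner_vector_smult: "inner ((c::complex) *s y) (x::complex^'n) = inner y (cnj c *s x)"
  by (simp add: inner_vec_def inner_complex_def algebra_simps)

lemma inner_adjoint: "inner ((A::complex^'n^'n) *v y) x = inner y (cmat_adjoint A *v x)"
proof -
  have "inner (A *v y) x = (\<Sum>i\<in>UNIV. \<Sum>j\<in>UNIV. inner (A$i$j * y$j) (x$i))"
    by (simp add: inner_vec_def matrix_vector_mult_def inner_sum_left)
  also have "\<dots> = (\<Sum>j\<in>UNIV. \<Sum>i\<in>UNIV. inner (y$j) (cnj (A$i$j) * x$i))"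
    by (subst sum.swap) (simp add: inner_complex_def algebra_simps)
  also have "\<dots> = inner y (cmat_adjoint A *v x)"
    by (simp add: inner_vec_def matrix_vector_mult_def inner_sum_right cmat_adjoint_def)
  finally show ?thesis .
qed

text \<open>Otherwise the orthogonal complement \<open>F\<close> of the fixed space \<open>E\<close> of \<open>U^M\<close> is a
  nonzero \<open>U\<close>-invariant subspace (because the adjoint of \<open>U\<close> commutes with \<open>U^M\<close>), and an
  eigenvector of \<open>U\<close> in \<open>F\<close> would lie in \<open>E\<close> as well.\<close>

lemma unitary_pow_eq_one:
  fixes U :: "complex^'n^'n"
  assumes u: "unitary_mat U"
    and ev: "\<And>r. mat_eigenvalue U r \<Longrightarrow> r ^ M = 1"
  shows "mpow U M = mat 1"
proof (rule ccontr)
  assume ne: "mpow U M \<noteq> mat 1"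
  define E where "E = {x. mpow U M *v x = x}"
  define F where "F = {y. \<forall>x\<in>E. inner y x = 0}"
  have "subspace E"
    by (auto simp: subspace_def E_def matrix_vector_right_distrib matrix_vector_scaleR)
  moreover have "E \<noteq> UNIV" using ne by (auto simp: E_def matrix_eq)
  ultimately have "dim E < DIM(complex^'n)"
    using dim_subset_UNIV[of E] dim_eq_full[of E] span_eq_iff[of E] by (metis le_neq_implies_less)
  then obtain y where y: "y \<noteq> 0" "\<And>x. x \<in> span E \<Longrightarrow> orthogonal y x"
    using orthogonal_to_subspace_exists by blast
  have "y \<in> F" using y(2) span_base by (auto simp: F_def orthogonal_def)
  have adj: "cmat_adjoint U ** U = mat 1" "U ** cmat_adjoint U = mat 1"
    using u by (auto simp: unitary_mat_def)
  have adjE: "cmat_adjoint U *v x \<in> E" if "x \<in> E" for x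
  proof -
    have "mpow U M ** cmat_adjoint U = cmat_adjoint U ** mpow U M"
      by (rule mpow_comm) (simp add: adj)
    then have "mpow U M *v (cmat_adjoint U *v x) = cmat_adjoint U *v (mpow U M *v x)"
      by (simp add: matrix_vector_mul_assoc)
    then show ?thesis using that by (simp add: E_def)
  qed
  have "invariant_subspace U F"
    unfolding invariant_subspace_def
  proof (intro conjI ballI allI)
    fix c a assume "a \<in> F"
    moreover have "cnj c *s x \<in> E" if "x \<in> E" for x
      using that by (simp add: E_def vector_scalar_commute)
    ultimately show "c *s a \<in> F" by (simp add: F_def inner_vector_smult)
  next
    fix a assume "a \<in> F"
    then show "U *v a \<in> F" using adjE by (simp add: F_def inner_adjoint)
  qed (auto simp: F_def inner_add_left)
  then obtain r z where z: "z \<in> F" "z \<noteq> 0" "U *v z = r *s z"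
    using invariant_subspace_eigenvector \<open>y \<in> F\<close> y(1) by blast
  have "r ^ M = 1" using ev z(2,3) by (auto simp: mat_eigenvalue_def)
  then have "z \<in> E" using eigenvector_mpow[OF z(3), of M] by (simp add: E_def)
  then have "inner z z = 0" using z(1) by (simp add: F_def)
  then show False using z(2) by simp
qed

text \<open>If \<open>V^-1 U^2 V = U^3\<close>, then for every eigenvalue \<open>r\<close> of \<open>U\<close> the number \<open>r^2\<close> is an
  eigenvalue of \<open>U^3\<close>; its eigenspace is \<open>U\<close>-invariant and so contains an eigenvector of
  \<open>U\<close>, whose eigenvalue \<open>m\<close> satisfies \<open>m^3 = r^2\<close>.\<close>

lemma eigenvalue_cube_root_of_square:
  fixes U V Vi :: "complex^'n^'n"
  assumes inv: "V ** Vi = mat 1"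
    and rel: "Vi ** (U ** U) ** V = U ** U ** U"
    and r: "mat_eigenvalue U r"
  shows "\<exists>m. mat_eigenvalue U m \<and> m ^ 3 = r ^ 2"
proof -
  obtain z where z: "z \<noteq> 0" "U *v z = r *s z" using r by (auto simp: mat_eigenvalue_def)
  define w where "w = Vi *v z"
  have "V *v w = z" using inv by (simp add: w_def matrix_vector_mul_assoc)
  then have "w \<noteq> 0" using z(1) by auto
  have "(U ** U ** U) *v w = Vi *v (U *v (U *v (V *v w)))"
    by (simp flip: rel add: matrix_vector_mul_assoc matrix_mul_assoc)
  also have "\<dots> = r ^ 2 *s w" using \<open>V *v w = z\<close> z(2)
    by (simp add: vector_scalar_commute vector_smult_assoc w_def power2_eq_square)
  finally have w: "(U ** U ** U) *v w = r ^ 2 *s w" .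
  define F where "F = {x. (U ** U ** U) *v x = r ^ 2 *s x}"
  have "invariant_subspace U F"
    unfolding invariant_subspace_def
  proof (intro conjI ballI allI)
    fix x assume "x \<in> F"
    have "(U ** U ** U) *v (U *v x) = U *v ((U ** U ** U) *v x)"
      by (simp add: matrix_vector_mul_assoc matrix_mul_assoc)
    then show "U *v x \<in> F" using \<open>x \<in> F\<close> by (simp add: F_def vector_scalar_commute)
  qed (auto simp: F_def matrix_vector_right_distrib vector_scalar_commute vector_add_ldistrib)
  then obtain m u where u: "u \<in> F" "u \<noteq> 0" "U *v u = m *s u"
    using invariant_subspace_eigenvector[of U F w] w by (auto simp: F_def \<open>w \<noteq> 0\<close>)
  have "(U ** U ** U) *v u = m ^ 3 *s u"
    using eigenvector_mpow[OF u(3), of 3] by (simp add: mpow_three)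
  then have "m ^ 3 = r ^ 2" using u(1,2) by (simp add: F_def)
  then show ?thesis using u(2,3) by (auto simp: mat_eigenvalue_def)
qed

section \<open>Arithmetic of the map \<open>m^3 = r^2\<close>\<close>

lemma cube_square_chain:
  fixes s :: "nat \<Rightarrow> 'a::comm_monoid_mult"
  assumes step: "\<And>k. s (Suc k) ^ 3 = s k ^ 2"
  shows "s m ^ (2 ^ k) = s (m + k) ^ (3 ^ k)"
proof (induction k)
  case 0 then show ?case by simp
next
  case (Suc k)
  have "s m ^ (2 ^ Suc k) = (s m ^ (2 ^ k)) ^ 2" by (simp add: power_mult[symmetric] mult.commute)
  also have "\<dots> = (s (m + k) ^ 2) ^ (3 ^ k)" by (simp add: Suc power_mult[symmetric] mult.commute)
  also have "\<dots> = (s (Suc (m + k)) ^ 3) ^ (3 ^ k)" by (simp add: step)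
  also have "\<dots> = s (m + Suc k) ^ (3 ^ Suc k)" by (simp add: power_mult[symmetric] mult.commute)
  finally show ?case .
qed

lemma not_3_dvd_exponent:
  assumes "m > 0"
  shows "\<not> (3::nat) dvd 2 ^ i * (3 ^ m - 2 ^ m)"
proof -
  have p3: "prime (3::nat)" by simp
  have "\<not> (3::nat) dvd 2 ^ i" using prime_dvd_power[OF p3, of 2 i] by auto
  moreover have "\<not> (3::nat) dvd 3 ^ m - 2 ^ m"
  proof
    assume "(3::nat) dvd 3 ^ m - 2 ^ m"
    moreover have "(3::nat) dvd 3 ^ m" using assms by (simp add: dvd_power)
    ultimately have "(3::nat) dvd 3 ^ m - (3 ^ m - 2 ^ m)" by (rule dvd_diff_nat[rotated])
    moreover have "(2::nat) ^ m < 3 ^ m" using assms by (simp add: power_strict_mono)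
    ultimately have "(3::nat) dvd 2 ^ m" by simp
    then show False using prime_dvd_power[OF p3, of 2 m] by auto
  qed
  ultimately show ?thesis using prime_dvd_mult_iff[OF p3] by blast
qed

text \<open>In a finite set of nonzero numbers closed under some choice of \<open>r \<mapsto> m\<close> with
  \<open>m^3 = r^2\<close>, every element is a root of unity of order prime to 3: the orbit of \<open>r\<close>
  repeats, \<open>s_i = s_(i+m)\<close>, which forces \<open>s_i^(3^m - 2^m) = 1\<close>, and \<open>r^(2^i) = s_i^(3^i)\<close>.\<close>

lemma cube_square_closed_root_of_unity:
  fixes S :: "'a::field set"
  assumes fin: "finite S" and nz: "0 \<notin> S" and step: "\<forall>r\<in>S. \<exists>m\<in>S. m ^ 3 = r ^ 2"
    and r: "r \<in> S"
  shows "\<exists>N>0. \<not> 3 dvd N \<and> r ^ N = 1"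
proof -
  obtain h where h: "\<forall>r\<in>S. h r \<in> S \<and> h r ^ 3 = r ^ 2" using step by metis
  define s where "s k = (h ^^ k) r" for k
  have sS: "s k \<in> S" for k by (induction k) (auto simp: s_def r h)
  have chain: "s m ^ (2 ^ k) = s (m + k) ^ (3 ^ k)" for m k
    by (rule cube_square_chain) (use h sS in \<open>simp add: s_def\<close>)
  have "\<not> inj_on s {..card S}"
  proof
    assume "inj_on s {..card S}"
    then have "card (s ` {..card S}) = Suc (card S)" by (simp add: card_image)
    moreover have "card (s ` {..card S}) \<le> card S" using sS fin by (intro card_mono) auto
    ultimately show False by simp
  qed
  then obtain i m where im: "m > 0" "s i = s (i + m)"
    unfolding inj_on_def by (metis add_diff_inverse_nat less_imp_le_nat linorder_neqE_nat
        not_less zero_less_diff)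
  have lt: "(2::nat) ^ m < 3 ^ m" using im(1) by (simp add: power_strict_mono)
  have "s i ^ (2 ^ m) * s i ^ (3 ^ m - 2 ^ m) = s i ^ (3 ^ m)"
    using lt by (simp flip: power_add)
  also have "\<dots> = s i ^ (2 ^ m)" using chain[of i m] im(2) by simp
  finally have q: "s i ^ (3 ^ m - 2 ^ m) = 1" using sS[of i] nz by (metis mult_cancel_left1 power_not_zero)
  define N :: nat where "N = 2 ^ i * (3 ^ m - 2 ^ m)"
  have "r ^ N = (r ^ (2 ^ i)) ^ (3 ^ m - 2 ^ m)" by (simp add: N_def power_mult)
  also have "r ^ (2 ^ i) = s i ^ (3 ^ i)" using chain[of 0 i] by (simp add: s_def)
  also have "(s i ^ (3 ^ i)) ^ (3 ^ m - 2 ^ m) = (s i ^ (3 ^ m - 2 ^ m)) ^ (3 ^ i)"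
    by (simp flip: power_mult add: mult.commute)
  finally have "r ^ N = 1" using q by simp
  moreover have "N > 0" using lt by (simp add: N_def)
  ultimately show ?thesis using not_3_dvd_exponent[OF im(1)] unfolding N_def by blast
qed

text \<open>A common exponent for all elements: the product of the individual ones.\<close>

lemma cube_square_closed_common_order:
  fixes S :: "'a::field set"
  assumes fin: "finite S" and nz: "0 \<notin> S" and step: "\<forall>r\<in>S. \<exists>m\<in>S. m ^ 3 = r ^ 2"
  shows "\<exists>M>0. \<not> 3 dvd M \<and> (\<forall>r\<in>S. r ^ M = 1)"
proof -
  obtain N where N: "\<forall>r\<in>S. N r > 0 \<and> \<not> 3 dvd N r \<and> r ^ N r = 1"
    using cube_square_closed_root_of_unity[OF fin nz step] by metis
  define M where "M = (\<Prod>r\<in>S. N r)"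
  have "M > 0" using N by (simp add: M_def prod_pos)
  moreover have "\<not> 3 dvd M"
    using N fin by (simp add: M_def prime_dvd_prod_iff[OF fin, of "3::nat"])
  moreover have "r ^ M = 1" if "r \<in> S" for r
  proof -
    have "M = N r * (\<Prod>x\<in>S - {r}. N x)" using that fin by (simp add: M_def prod.remove)
    then show ?thesis using N that by (simp add: power_mult)
  qed
  ultimately show ?thesis by blast
qed

lemma order_prime_to_3:
  fixes U V Vi :: "complex^'n^'n"
  assumes u: "unitary_mat U" and inv: "V ** Vi = mat 1"
    and rel: "Vi ** (U ** U) ** V = U ** U ** U"
  shows "\<exists>M>0. \<not> 3 dvd M \<and> mpow U M = mat 1"
proof -
  have "\<exists>M>0. \<not> 3 dvd M \<and> (\<forall>r\<in>{r. mat_eigenvalue U r}. r ^ M = 1)"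
    using finite_eigenvalues unitary_eigenvalue_nonzero[OF u]
      eigenvalue_cube_root_of_square[OF inv rel]
    by (intro cube_square_closed_common_order) auto
  then show ?thesis using unitary_pow_eq_one[OF u] by auto
qed

text \<open>If \<open>A^M = 1\<close> with \<open>3 \<nmid> M\<close>, then \<open>A\<close> is a power of \<open>A^3\<close>, since \<open>3e \<equiv> 1 (mod M)\<close> is
  solvable.\<close>

lemma power_of_cube:
  assumes one: "mpow A M = mat 1" and M: "\<not> 3 dvd M"
  shows "\<exists>e. mpow (mpow A 3) e = A"
proof -
  obtain e k where ek: "3 * e = k * M + 1"
  proof -
    have "M mod 3 = 1 \<or> M mod 3 = 2" using M by presburger
    then have "M = 3 * (M div 3) + 1 \<or> M = 3 * (M div 3) + 2" by presburger
    then obtain t where "M = 3 * t + 1 \<or> M = 3 * t + 2" by blast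
    then show ?thesis
    proof
      assume "M = 3 * t + 1"
      then have "3 * (2 * t + 1) = 2 * M + 1" by simp
      then show ?thesis by (rule that)
    next
      assume "M = 3 * t + 2"
      then have "3 * (t + 1) = 1 * M + 1" by simp
      then show ?thesis by (rule that)
    qed
  qed
  have "mpow A (k * M) = mat 1"
    by (induction k) (simp_all add: mpow_add one)
  then have "mpow A (3 * e) = A" by (simp add: ek mpow_add)
  then show ?thesis by (metis mpow_mult)
qed

theorem theorem1:
  fixes U V :: "complex^'n^'n"
  assumes "unitary_mat U" and "unitary_mat V"
    and "matrix_inv V ** (U ** U) ** V = U ** U ** U"
  shows "U ** matrix_inv V ** U ** V = matrix_inv V ** U ** V ** U"
proof -
  define W where "W = matrix_inv V ** U ** V"
  note inv = unitary_matrix_inv[OF assms(2)]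
  have "W ** W = matrix_inv V ** U ** (V ** matrix_inv V) ** U ** V"
    by (simp add: W_def matrix_mul_assoc)
  also have "\<dots> = mpow U 3"
    using assms(3) by (simp add: inv(1) mpow_three matrix_mul_assoc)
  finally have "mpow U 3 ** W = W ** mpow U 3"
    by (metis matrix_mul_assoc)
  obtain M where "M > 0" "\<not> 3 dvd M" "mpow U M = mat 1"
    using order_prime_to_3[OF assms(1) inv(1) assms(3)] by blast
  then obtain e where "mpow (mpow U 3) e = U" using power_of_cube by blast
  then have "U ** W = W ** U" using mpow_comm[OF \<open>mpow U 3 ** W = W ** mpow U 3\<close>, of e] by simp
  then show ?thesis by (simp add: W_def matrix_mul_assoc)
qed

end
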